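(* For any utility profile $\mathbf{u}$, the game $G=(\mathcal{L},R^L,\mathbf{u})$ has the following properties: (1) If $\mathbf{b}$ is a PNE of $G$ then $|W(\mathbf{b})|\in\{1,m\}$. Moreover, $|W(\mathbf{b})|=m$ if and only if $\mathbf{b}$ is the trivial ballot vector and all voters rank $c_1$ first. (2) If $\mathbf{b}$ is a PNE of $G$ then there exists at most one voter $i$ with $b_i\neq\bot$. (3) $G$ admits a PNE if and only if all voters rank $c_1$ first (in which case $c_1$ is the unique PNE winner) or there exists a candidate $c_j$ with $j>1$ such that (i) $\mathrm{sc}(c_j,\mathbf{a})>0$ and (ii) for every $k<j$, all voters prefer $c_j$ to $c_k$. If such a candidate exists, he is unique, and wins in all PNE of $G$.
   Context: Let $C=\{c_1,\dots,c_m\}$ be a set of candidates and $N=\{1,\dots,n\}$ a set of voters. Each voter $i$ has an injective utility function $u_i:C\to\mathbb{N}$; $\mathbf{u}=(u_1,\dots,u_n)$. Voter $i$'s preference $\succ_i$ is $c\succ_i c'$ iff $u_i(c)>u_i(c')$; $a_i$ is $i$'s top candidate and $\mathbf{a}=(a_1,\dots,a_n)$ is the truthful ballot vector. A ballot vector is $\mathbf{b}=(b_1,\dots,b_n)$ with $b_i\in C\cup\{\bot\}$ ($\bot$ = abstain); it is trivial if all $b_i=\bot$. $(\mathbf{b}_{-i},b')$ denotes $\mathbf{b}$ with $b_i$ replaced by $b'$. The score is $\mathrm{sc}(c,\mathbf{b})=|\{i:b_i=c\}|$, $M(\mathbf{b})=\max_{c}\mathrm{sc}(c,\mathbf{b})$,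 and $W(\mathbf{b})=\{c:\mathrm{sc}(c,\mathbf{b})=M(\mathbf{b})\}$ (so $W(\mathbf{b})=C$ for the trivial ballot). Under the lexicographic tie-breaking rule $R^L$, the winner is the $c_j\in W(\mathbf{b})$ with smallest index $j$. Fix $0<\varepsilon<\min\{1/m,1/n\}$. In the lazy setting $\mathcal{L}$, if $c$ is the winner of $\mathbf{b}$, voter $i$'s utility is $U_i(\mathbf{b})=u_i(c)$ if $b_i\in C$ and $u_i(c)+\varepsilon$ if $b_i=\bot$. The game $(\mathcal{L},R^L,\mathbf{u})$ has players $N$, action set $C\cup\{\bot\}$ for each. A ballot vector $\mathbf{b}$ is a pure Nash equilibrium (PNE) if $U_i(\mathbf{b})\ge U_i(\mathbf{b}_{-i},b')$ for all $i\in N$ and all $b'\in C\cup\{\bot\}$. *)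

theory Defs
  imports Complex_Main
begin

text \<open>Candidates are the indices 1..m (index j stands for c_j), voters are 1..n.  A ballot vector is
  b :: voter => candidate option, where None stands for abstention.\<close>

definition cands :: "nat \<Rightarrow> nat set" where
  "cands m = {1..m}"

definition voters :: "nat \<Rightarrow> nat set" where
  "voters n = {1..n}"

definition valid_profile :: "nat \<Rightarrow> nat \<Rightarrow> (nat \<Rightarrow> nat \<Rightarrow> nat) \<Rightarrow> bool" where
  "valid_profile m n u \<longleftrightarrow> (\<forall>i\<in>voters n. inj_on (u i) (cands m))"

definition valid_ballot :: "nat \<Rightarrow> nat \<Rightarrow> (nat \<Rightarrow> nat option) \<Rightarrow> bool" where
  "valid_ballot m n b \<longleftrightarrow> (\<forall>i\<in>voters n. \<forall>c. b i = Some c \<longrightarrow> c \<in> cands m)"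

definition actions :: "nat \<Rightarrow> nat option set" where
  "actions m = insert None (Some ` cands m)"

definition top :: "nat \<Rightarrow> (nat \<Rightarrow> nat \<Rightarrow> nat) \<Rightarrow> nat \<Rightarrow> nat" where
  "top m u i = (THE c. c \<in> cands m \<and> (\<forall>c'\<in>cands m. c' \<noteq> c \<longrightarrow> u i c' < u i c))"

definition truthful :: "nat \<Rightarrow> (nat \<Rightarrow> nat \<Rightarrow> nat) \<Rightarrow> nat \<Rightarrow> nat option" where
  "truthful m u i = Some (top m u i)"

definition sc :: "nat \<Rightarrow> nat \<Rightarrow> (nat \<Rightarrow> nat option) \<Rightarrow> nat" where
  "sc n c b = card {i \<in> voters n. b i = Some c}"

definition maxsc :: "nat \<Rightarrow> nat \<Rightarrow> (nat \<Rightarrow> nat option) \<Rightarrow> nat" where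
  "maxsc m n b = Max ((\<lambda>c. sc n c b) ` cands m)"

definition W :: "nat \<Rightarrow> nat \<Rightarrow> (nat \<Rightarrow> nat option) \<Rightarrow> nat set" where
  "W m n b = {c \<in> cands m. sc n c b = maxsc m n b}"

definition winner :: "nat \<Rightarrow> nat \<Rightarrow> (nat \<Rightarrow> nat option) \<Rightarrow> nat" where
  "winner m n b = Min (W m n b)"

definition trivial_ballot :: "nat \<Rightarrow> (nat \<Rightarrow> nat option) \<Rightarrow> bool" where
  "trivial_ballot n b \<longleftrightarrow> (\<forall>i\<in>voters n. b i = None)"

definition Ut :: "nat \<Rightarrow> nat \<Rightarrow> (nat \<Rightarrow> nat \<Rightarrow> nat) \<Rightarrow> real \<Rightarrow> nat \<Rightarrow> (nat \<Rightarrow> nat option) \<Rightarrow> real" where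
  "Ut m n u eps i b = real (u i (winner m n b)) + (if b i = None then eps else 0)"

definition PNE :: "nat \<Rightarrow> nat \<Rightarrow> (nat \<Rightarrow> nat \<Rightarrow> nat) \<Rightarrow> real \<Rightarrow> (nat \<Rightarrow> nat option) \<Rightarrow> bool" where
  "PNE m n u eps b \<longleftrightarrow> valid_ballot m n b \<and>
     (\<forall>i\<in>voters n. \<forall>b'\<in>actions m. Ut m n u eps i b \<ge> Ut m n u eps i (b(i := b')))"

definition good_cand :: "nat \<Rightarrow> nat \<Rightarrow> (nat \<Rightarrow> nat \<Rightarrow> nat) \<Rightarrow> nat \<Rightarrow> bool" where
  "good_cand m n u j \<longleftrightarrow> j \<in> cands m \<and> 1 < j \<and> sc n j (truthful m u) > 0 \<and>
     (\<forall>k\<in>cands m. k < j \<longrightarrow> (\<forall>i\<in>voters n. u i j > u i k))"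

end

theory Submission
  imports Defs
begin

text \<open>Since utilities are integers and the abstention bonus is eps < 1, a voter in equilibrium
  votes only if his vote is pivotal. A vote for a losing candidate can be withdrawn without
  changing the winner, and if two voters vote (necessarily for the winner) either one can
  withdraw; so at most one voter votes. If nobody votes, c_1 wins by tie-breaking and a voter
  whose top candidate is not c_1 would vote for it. If a single voter votes for w, then w is his
  top candidate, w \<noteq> c_1 (otherwise abstaining keeps c_1 as winner), and every other voter
  prefers w to each c_k with k < w, because a vote for c_k makes c_k win the tie. Conversely,
  these two kinds of ballot vectors are equilibria.\<close>

subsection \<open>Scores and the lexicographic winner\<close>

lemma finite_voters [simp]: "finite (voters n)"
  by (simp add: voters_def)

lemma finite_cands [simp]: "finite (cands m)"
  by (simp add: cands_def)

lemma one_in_cands: "1 \<le> m \<Longrightarrow> 1 \<in> cands m"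
  by (simp add: cands_def)

lemma sc_split:
  assumes "i \<in> voters n"
  shows "sc n d b = card {k \<in> voters n - {i}. b k = Some d} + (if b i = Some d then 1 else 0)"
proof (cases "b i = Some d")
  case True
  then have "{k \<in> voters n. b k = Some d} = insert i {k \<in> voters n - {i}. b k = Some d}"
    using assms by auto
  then show ?thesis using True by (simp add: sc_def)
next
  case False
  then have "{k \<in> voters n. b k = Some d} = {k \<in> voters n - {i}. b k = Some d}"
    using assms by auto
  then show ?thesis using False by (simp add: sc_def)
qed

lemma sc_fun_upd:
  assumes "i \<in> voters n"
  shows "sc n d (b(i := x)) + (if b i = Some d then 1 else 0) = sc n d b + (if x = Some d then 1 else 0)"
proof -
  have "{k \<in> voters n - {i}. (b(i := x)) k = Some d} = {k \<in> voters n - {i}. b k = Some d}"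
    by auto
  then show ?thesis using sc_split[OF assms, of d b] sc_split[OF assms, of d "b(i := x)"] by simp
qed

lemma sc_pos_iff: "0 < sc n d b \<longleftrightarrow> (\<exists>i\<in>voters n. b i = Some d)"
  by (auto simp: sc_def card_gt_0_iff)

lemma sc_eq_0_iff: "sc n d b = 0 \<longleftrightarrow> (\<forall>i\<in>voters n. b i \<noteq> Some d)"
  using sc_pos_iff[of n d b] by auto

lemma sc_le_maxsc: "c \<in> cands m \<Longrightarrow> sc n c b \<le> maxsc m n b"
  unfolding maxsc_def by (intro Max_ge) auto

lemma maxsc_attained:
  assumes "1 \<le> m"
  shows "\<exists>c\<in>cands m. sc n c b = maxsc m n b"
proof -
  have "maxsc m n b \<in> (\<lambda>c. sc n c b) ` cands m"
    unfolding maxsc_def using one_in_cands[OF assms] by (intro Max_in) auto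
  then show ?thesis by auto
qed

lemma winner_in_W: "1 \<le> m \<Longrightarrow> winner m n b \<in> W m n b"
  unfolding winner_def using maxsc_attained[of m n b] by (intro Min_in) (auto simp: W_def)

lemma winner_in_cands: "1 \<le> m \<Longrightarrow> winner m n b \<in> cands m"
  using winner_in_W by (auto simp: W_def)

lemma sc_le_sc_winner: "1 \<le> m \<Longrightarrow> c \<in> cands m \<Longrightarrow> sc n c b \<le> sc n (winner m n b) b"
  using winner_in_W[of m n b] sc_le_maxsc[of c m n b] by (simp add: W_def)

lemma sc_less_sc_winner:
  assumes "1 \<le> m" "c \<in> cands m" "c < winner m n b"
  shows "sc n c b < sc n (winner m n b) b"
proof -
  have "c \<notin> W m n b"
  proof
    assume "c \<in> W m n b"
    then have "winner m n b \<le> c" unfolding winner_def by (intro Min_le) (simp add: W_def)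
    with assms(3) show False by simp
  qed
  then show ?thesis
    using assms winner_in_W[of m n b] sc_le_maxsc[of c m n b] by (auto simp: W_def)
qed

lemma winner_eqI:
  assumes "1 \<le> m" "c \<in> cands m"
    and "\<And>d. d \<in> cands m \<Longrightarrow> sc n d b \<le> sc n c b"
    and "\<And>d. d \<in> cands m \<Longrightarrow> d < c \<Longrightarrow> sc n d b < sc n c b"
  shows "winner m n b = c"
proof -
  have c_max: "sc n c b = maxsc m n b"
    using maxsc_attained[OF assms(1)] assms(2,3) sc_le_maxsc[OF assms(2)] by (metis le_antisym)
  show ?thesis unfolding winner_def
  proof (rule Min_eqI)
    show "c \<in> W m n b" using assms(2) c_max by (simp add: W_def)
    show "c \<le> d" if "d \<in> W m n b" for d
      using that assms(4)[of d] c_max by (force simp: W_def)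
  qed (simp add: W_def)
qed

lemma
  assumes "1 \<le> m" "c \<in> cands m" "\<And>d. d \<in> cands m \<Longrightarrow> d \<noteq> c \<Longrightarrow> sc n d b < sc n c b"
  shows winner_strict_max: "winner m n b = c" and W_strict_max: "W m n b = {c}"
proof -
  have le: "sc n d b \<le> sc n c b" if "d \<in> cands m" for d
    using assms(3)[OF that] by (cases "d = c") auto
  show "winner m n b = c"
    using assms le by (intro winner_eqI) auto
  have "maxsc m n b = sc n c b"
    unfolding maxsc_def using assms(2) le by (intro Max_eqI) auto
  then show "W m n b = {c}" using assms(2,3) by (force simp: W_def)
qed

lemma trivial_ballot_sc: "trivial_ballot n b \<Longrightarrow> sc n d b = 0"
  by (simp add: trivial_ballot_def sc_eq_0_iff)

lemma W_trivial_ballot: "trivial_ballot n b \<Longrightarrow> W m n b = cands m"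
  by (cases "cands m = {}") (auto simp: W_def maxsc_def trivial_ballot_sc)

lemma winner_trivial_ballot: "1 \<le> m \<Longrightarrow> trivial_ballot n b \<Longrightarrow> winner m n b = 1"
  by (rule winner_eqI) (auto simp: one_in_cands cands_def trivial_ballot_sc)

lemma
  assumes "1 \<le> m" "w \<in> cands m" "\<forall>i\<in>voters n. b i \<noteq> None \<longrightarrow> b i = Some w"
    and "i \<in> voters n" "b i = Some w"
  shows winner_unanimous: "winner m n b = w" and W_unanimous: "W m n b = {w}"
proof -
  have "sc n d b = 0" if "d \<noteq> w" for d
    using assms(3) that by (auto simp: sc_eq_0_iff)
  moreover have "0 < sc n w b" using assms(4,5) by (auto simp: sc_pos_iff)
  ultimately have "sc n d b < sc n w b" if "d \<noteq> w" for d
    using that by simp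
  then show "winner m n b = w" "W m n b = {w}"
    using winner_strict_max[OF assms(1,2)] W_strict_max[OF assms(1,2)] by blast+
qed

lemma winner_two_votes:
  assumes "1 \<le> m" "i \<in> voters n" "i' \<in> voters n" "i \<noteq> i'"
    and "b i = Some c" "b i' = Some c'" "c \<in> cands m" "c' \<in> cands m"
    and "\<forall>k\<in>voters n. k \<noteq> i \<and> k \<noteq> i' \<longrightarrow> b k = None"
  shows "winner m n b = min c c'"
proof -
  have "{k \<in> voters n. b k = Some d} = (if d = c then {i} else {}) \<union> (if d = c' then {i'} else {})" for d
    using assms(2-6,9) by (auto split: if_splits)
  then have "sc n d b = (if d = c then 1 else 0) + (if d = c' then 1 else 0)" for d
    using assms(4) by (simp add: sc_def)
  then show ?thesis
    using assms(7,8) by (intro winner_eqI assms(1)) (auto simp: min_def split: if_splits)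
qed

lemma winner_withdraw_losing_vote:
  assumes "1 \<le> m" "i \<in> voters n" "b i = Some c" "c \<noteq> winner m n b"
  shows "winner m n (b(i := None)) = winner m n b"
proof -
  let ?w = "winner m n b"
  have sc_upd: "sc n d (b(i := None)) + (if c = d then 1 else 0) = sc n d b" for d
    using sc_fun_upd[OF assms(2), of d b None] assms(3) by simp
  then have sc_le: "sc n d (b(i := None)) \<le> sc n d b" for d
    by (metis le_add1)
  have sc_w: "sc n ?w (b(i := None)) = sc n ?w b"
    using sc_upd[of ?w] assms(4) by simp
  show ?thesis
  proof (rule winner_eqI[OF assms(1) winner_in_cands[OF assms(1)]])
    show "sc n d (b(i := None)) \<le> sc n ?w (b(i := None))" if "d \<in> cands m" for d
      using sc_le[of d] sc_le_sc_winner[OF assms(1) that, of n b] sc_w by simp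
    show "sc n d (b(i := None)) < sc n ?w (b(i := None))" if "d \<in> cands m" "d < ?w" for d
      using sc_le[of d] sc_less_sc_winner[OF assms(1) that] sc_w by simp
  qed
qed

subsection \<open>Top candidates\<close>

lemma good_cand_voter: "good_cand m n u j \<Longrightarrow> \<exists>i\<in>voters n. top m u i = j"
  by (auto simp: good_cand_def sc_pos_iff truthful_def)

lemma top_spec:
  assumes "1 \<le> m" "inj_on (u i) (cands m)"
  shows "top m u i \<in> cands m \<and> (\<forall>c\<in>cands m. c \<noteq> top m u i \<longrightarrow> u i c < u i (top m u i))"
proof -
  let ?best = "\<lambda>t. t \<in> cands m \<and> (\<forall>c\<in>cands m. c \<noteq> t \<longrightarrow> u i c < u i t)"
  obtain t where t: "t \<in> cands m" "u i t = Max (u i ` cands m)"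
    using Max_in[of "u i ` cands m"] one_in_cands[OF assms(1)] by fastforce
  have "?best t"
  proof (intro conjI ballI impI)
    fix c assume "c \<in> cands m" "c \<noteq> t"
    then have "u i c \<le> u i t" "u i c \<noteq> u i t"
      using t inj_onD[OF assms(2)] by auto
    then show "u i c < u i t" by simp
  qed (rule t(1))
  moreover have "s = t" if "?best s" for s
    using that \<open>?best t\<close> less_asym by blast
  ultimately have "\<exists>!t. ?best t" by blast
  then show ?thesis unfolding top_def by (rule theI')
qed

context
  fixes m n :: nat and u :: "nat \<Rightarrow> nat \<Rightarrow> nat"
  assumes m_pos: "1 \<le> m" and profile: "valid_profile m n u"
begin

lemma top_in_cands: "i \<in> voters n \<Longrightarrow> top m u i \<in> cands m"
  using top_spec[OF m_pos] profile by (auto simp: valid_profile_def)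

lemma top_preferred:
  "i \<in> voters n \<Longrightarrow> c \<in> cands m \<Longrightarrow> c \<noteq> top m u i \<Longrightarrow> u i c < u i (top m u i)"
  using top_spec[OF m_pos] profile by (auto simp: valid_profile_def)

lemma good_cand_unique:
  assumes "good_cand m n u j" "good_cand m n u j'"
  shows "j = j'"
proof -
  have False if g: "good_cand m n u j" "good_cand m n u j'" "j < j'" for j j'
  proof -
    obtain i where i: "i \<in> voters n" "top m u i = j"
      using good_cand_voter[OF g(1)] by blast
    then have "u i j' < u i j"
      using top_preferred[OF i(1)] g(2,3) by (auto simp: good_cand_def)
    moreover have "u i j < u i j'"
      using g i(1) by (auto simp: good_cand_def)
    ultimately show False by simp
  qed
  then show ?thesis using assms by (meson linorder_neqE_nat)
qed

subsection \<open>Equilibria of the lazy game\<close>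

context
  fixes eps :: real
  assumes eps_pos: "0 < eps" and eps_lt_1: "eps < 1"
begin

lemma PNE_vote_deviation:
  assumes "PNE m n u eps b" "i \<in> voters n" "c \<in> cands m"
  shows "u i (winner m n (b(i := Some c))) \<le> u i (winner m n b)"
proof -
  have "Ut m n u eps i (b(i := Some c)) \<le> Ut m n u eps i b"
    using assms by (auto simp: PNE_def actions_def)
  then have "real (u i (winner m n (b(i := Some c)))) < real (u i (winner m n b)) + 1"
    using eps_lt_1 by (simp add: Ut_def split: if_splits)
  then show ?thesis by linarith
qed

lemma PNE_abstain_deviation:
  assumes "PNE m n u eps b" "i \<in> voters n" "b i \<noteq> None"
  shows "u i (winner m n (b(i := None))) < u i (winner m n b)"
proof -
  have "Ut m n u eps i (b(i := None)) \<le> Ut m n u eps i b"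
    using assms by (auto simp: PNE_def actions_def)
  then show ?thesis using assms(3) eps_pos by (simp add: Ut_def)
qed

lemma PNE_trivial_ballot_top:
  assumes "PNE m n u eps b" "trivial_ballot n b" "i \<in> voters n"
  shows "top m u i = 1"
proof (rule ccontr)
  let ?t = "top m u i"
  assume "?t \<noteq> 1"
  then have "u i 1 < u i ?t"
    using top_preferred[OF assms(3) one_in_cands[OF m_pos]] by simp
  moreover have "winner m n (b(i := Some ?t)) = ?t"
    using assms(2,3) top_in_cands[OF assms(3)]
    by (intro winner_unanimous[OF m_pos, of _ _ _ i]) (auto simp: trivial_ballot_def)
  ultimately show False
    using PNE_vote_deviation[OF assms(1,3) top_in_cands[OF assms(3)]]
      winner_trivial_ballot[OF m_pos assms(2)] by simp
qed

lemma PNE_vote_for_winner: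
  assumes "PNE m n u eps b" "i \<in> voters n" "b i = Some c"
  shows "c = winner m n b"
proof (rule ccontr)
  assume "c \<noteq> winner m n b"
  then have "winner m n (b(i := None)) = winner m n b"
    by (rule winner_withdraw_losing_vote[where b = b, OF m_pos assms(2,3)])
  then show False using PNE_abstain_deviation[OF assms(1,2)] assms(3) by simp
qed

lemma PNE_at_most_one_voter:
  assumes "PNE m n u eps b" "i \<in> voters n" "i' \<in> voters n" "b i \<noteq> None" "b i' \<noteq> None"
  shows "i = i'"
proof (rule ccontr)
  let ?w = "winner m n b"
  assume "i \<noteq> i'"
  have votes: "\<forall>k\<in>voters n. b k \<noteq> None \<longrightarrow> b k = Some ?w"
    using PNE_vote_for_winner[OF assms(1)] by blast
  then have "\<forall>k\<in>voters n. (b(i := None)) k \<noteq> None \<longrightarrow> (b(i := None)) k = Some ?w"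
    by simp
  moreover have "(b(i := None)) i' = Some ?w"
    using votes assms(3,5) \<open>i \<noteq> i'\<close> by auto
  ultimately have "winner m n (b(i := None)) = ?w"
    using winner_unanimous[OF m_pos winner_in_cands[OF m_pos] _ assms(3)] by blast
  then show False
    using PNE_abstain_deviation[OF assms(1,2,4)] by simp
qed

lemma PNE_sole_voter_top:
  assumes "PNE m n u eps b" "i0 \<in> voters n" "b i0 = Some w"
    and others: "\<forall>i\<in>voters n. i \<noteq> i0 \<longrightarrow> b i = None"
  shows "top m u i0 = w"
proof (rule ccontr)
  let ?t = "top m u i0"
  assume "?t \<noteq> w"
  have w_winner: "winner m n b = w"
    using PNE_vote_for_winner[OF assms(1-3)] by simp
  then have "u i0 w < u i0 ?t"
    using top_preferred[OF assms(2) winner_in_cands[OF m_pos]] \<open>?t \<noteq> w\<close> by metis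
  moreover have "winner m n (b(i0 := Some ?t)) = ?t"
    using others top_in_cands[OF assms(2)] assms(2)
    by (intro winner_unanimous[OF m_pos, of _ _ _ i0]) auto
  ultimately show False
    using PNE_vote_deviation[OF assms(1,2) top_in_cands[OF assms(2)]] w_winner by simp
qed

lemma PNE_sole_voter_good_cand:
  assumes "PNE m n u eps b" "i0 \<in> voters n" "b i0 = Some w"
    and others: "\<forall>i\<in>voters n. i \<noteq> i0 \<longrightarrow> b i = None"
  shows "good_cand m n u w"
proof -
  have w_winner: "winner m n b = w"
    using PNE_vote_for_winner[OF assms(1-3)] by simp
  have w_cand: "w \<in> cands m"
    using winner_in_cands[OF m_pos] w_winner by blast
  have "trivial_ballot n (b(i0 := None))"
    using others by (simp add: trivial_ballot_def)
  then have "u i0 1 < u i0 w"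
    using PNE_abstain_deviation[OF assms(1,2)] assms(3)
      winner_trivial_ballot[OF m_pos] w_winner by fastforce
  then have "w \<noteq> 1" by auto
  have top_w: "top m u i0 = w"
    by (rule PNE_sole_voter_top[OF assms])
  have "0 < sc n w (truthful m u)"
    using assms(2) top_w by (auto simp: sc_pos_iff truthful_def)
  moreover have "u i k < u i w" if "k \<in> cands m" "k < w" "i \<in> voters n" for i k
  proof (cases "i = i0")
    case True
    then show ?thesis using top_preferred[OF assms(2) that(1)] top_w that(2) by simp
  next
    case False
    then have "winner m n (b(i := Some k)) = min w k"
      using assms(2,3) others that w_cand by (intro winner_two_votes[OF m_pos, of i0 _ i]) auto
    then have "u i k \<le> u i w"
      using PNE_vote_deviation[OF assms(1) that(3,1)] w_winner that(2) by simp
    moreover have "u i k \<noteq> u i w"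
      using profile that w_cand inj_onD by (fastforce simp: valid_profile_def)
    ultimately show ?thesis by simp
  qed
  ultimately show "good_cand m n u w"
    using w_cand \<open>w \<noteq> 1\<close> by (simp add: good_cand_def cands_def)
qed

lemma PNE_cases:
  assumes "PNE m n u eps b"
  obtains (trivial) "trivial_ballot n b" "\<forall>i\<in>voters n. top m u i = 1"
  | (sole) i0 w where "i0 \<in> voters n" "b i0 = Some w" "\<forall>i\<in>voters n. i \<noteq> i0 \<longrightarrow> b i = None"
      "top m u i0 = w" "good_cand m n u w"
proof (cases "trivial_ballot n b")
  case True
  then show ?thesis using trivial PNE_trivial_ballot_top[OF assms] by blast
next
  case False
  then obtain i0 w where i0: "i0 \<in> voters n" "b i0 = Some w"
    by (auto simp: trivial_ballot_def)
  then have "\<forall>i\<in>voters n. i \<noteq> i0 \<longrightarrow> b i = None"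
    using PNE_at_most_one_voter[OF assms] by blast
  then show ?thesis
    using sole i0 PNE_sole_voter_top[OF assms i0] PNE_sole_voter_good_cand[OF assms i0] by blast
qed

lemma PNE_trivial_ballot:
  assumes "\<forall>i\<in>voters n. top m u i = 1"
  shows "PNE m n u eps (\<lambda>_. None)"
  unfolding PNE_def
proof (intro conjI ballI)
  fix i x assume i: "i \<in> voters n" and x: "x \<in> actions m"
  have winner_1: "winner m n (\<lambda>_. None) = 1"
    by (simp add: winner_trivial_ballot[OF m_pos] trivial_ballot_def)
  show "Ut m n u eps i ((\<lambda>_. None)(i := x)) \<le> Ut m n u eps i (\<lambda>_. None)"
  proof (cases x)
    case (Some c)
    then have c: "c \<in> cands m" using x by (auto simp: actions_def)
    then have "winner m n ((\<lambda>_. None)(i := x)) = c"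
      using i Some by (intro winner_unanimous[OF m_pos, of _ _ _ i]) auto
    moreover have "u i c \<le> u i 1"
      using top_preferred[OF i c] assms i by (cases "c = 1") auto
    ultimately show ?thesis
      using Some winner_1 eps_pos by (simp add: Ut_def)
  qed simp
qed (simp add: valid_ballot_def)

lemma PNE_sole_vote:
  assumes good: "good_cand m n u j" and i0: "i0 \<in> voters n" "top m u i0 = j"
  shows "PNE m n u eps ((\<lambda>_. None)(i0 := Some j))"
    (is "PNE m n u eps ?b")
  unfolding PNE_def
proof (intro conjI ballI)
  have j: "j \<in> cands m" "1 < j" and pref: "\<And>k i. k \<in> cands m \<Longrightarrow> k < j \<Longrightarrow> i \<in> voters n \<Longrightarrow> u i k < u i j"
    using good by (auto simp: good_cand_def)
  then show "valid_ballot m n ?b"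
    by (simp add: valid_ballot_def)
  have winner_b: "winner m n ?b = j"
    using i0 j by (intro winner_unanimous[OF m_pos, of _ _ _ i0]) auto
  fix i x assume i: "i \<in> voters n" and x: "x \<in> actions m"
  show "Ut m n u eps i (?b(i := x)) \<le> Ut m n u eps i ?b"
  proof (cases x)
    case None
    show ?thesis
    proof (cases "i = i0")
      case True
      then have "winner m n (?b(i := x)) = 1"
        using None by (intro winner_trivial_ballot[OF m_pos]) (simp add: trivial_ballot_def)
      moreover have "u i 1 < u i j"
        using pref[OF one_in_cands[OF m_pos] j(2) i] .
      ultimately show ?thesis
        using None True winner_b eps_lt_1 by (simp add: Ut_def)
    qed (use None in simp)
  next
    case (Some c)
    then have c: "c \<in> cands m" using x by (auto simp: actions_def)
    have "u i (winner m n (?b(i := Some c))) \<le> u i j"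
    proof (cases "i = i0")
      case True
      then have "winner m n (?b(i := Some c)) = c"
        using i c by (intro winner_unanimous[OF m_pos, of _ _ _ i]) auto
      then show ?thesis
        using top_preferred[OF i c] True i0(2) by (cases "c = j") auto
    next
      case False
      then have "winner m n (?b(i := Some c)) = min j c"
        using i i0(1) j(1) c by (intro winner_two_votes[OF m_pos, of i0 _ i]) auto
      then show ?thesis
        using pref[OF c _ i] by (cases "c < j") (auto simp: min_def less_imp_le)
    qed
    then show ?thesis
      using Some winner_b eps_pos by (simp add: Ut_def)
  qed
qed


lemma PNE_card_voters:
  assumes "PNE m n u eps b"
  shows "card {i \<in> voters n. b i \<noteq> None} \<le> 1"
  using PNE_at_most_one_voter[OF assms] by (auto simp: card_le_Suc0_iff_eq)

lemma PNE_card_W: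
  assumes "PNE m n u eps b"
  shows "card (W m n b) \<in> {1, m} \<and>
    (card (W m n b) = m \<longleftrightarrow> trivial_ballot n b \<and> (\<forall>i\<in>voters n. top m u i = 1))"
  using assms
proof (cases rule: PNE_cases)
  case trivial
  then show ?thesis by (simp add: W_trivial_ballot cands_def)
next
  case (sole i0 w)
  then have "W m n b = {w}"
    using good_cand_def by (intro W_unanimous[OF m_pos, of _ _ _ i0]) auto
  moreover have "m \<noteq> 1" "\<not> trivial_ballot n b"
    using sole by (auto simp: good_cand_def cands_def trivial_ballot_def)
  ultimately show ?thesis by auto
qed

lemma PNE_winner_if_tops_1:
  assumes "\<forall>i\<in>voters n. top m u i = 1" "PNE m n u eps b"
  shows "winner m n b = 1"
  using assms(2)
proof (cases rule: PNE_cases)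
  case trivial
  then show ?thesis by (simp add: winner_trivial_ballot[OF m_pos])
next
  case (sole i0 w)
  then show ?thesis using assms(1) by (auto simp: good_cand_def)
qed

lemma PNE_winner_good_cand:
  assumes "good_cand m n u j" "PNE m n u eps b"
  shows "winner m n b = j"
  using assms(2)
proof (cases rule: PNE_cases)
  case trivial
  then show ?thesis
    using assms(1) good_cand_voter[OF assms(1)] by (auto simp: good_cand_def)
next
  case (sole i0 w)
  then show ?thesis
    using good_cand_unique[OF assms(1)] PNE_vote_for_winner[OF assms(2)] by metis
qed

lemma PNE_exists_iff:
  "(\<exists>b. PNE m n u eps b) \<longleftrightarrow> (\<forall>i\<in>voters n. top m u i = 1) \<or> (\<exists>j. good_cand m n u j)"
proof
  assume "\<exists>b. PNE m n u eps b"
  then show "(\<forall>i\<in>voters n. top m u i = 1) \<or> (\<exists>j. good_cand m n u j)"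
    using PNE_cases by metis
next
  assume "(\<forall>i\<in>voters n. top m u i = 1) \<or> (\<exists>j. good_cand m n u j)"
  then show "\<exists>b. PNE m n u eps b"
    using PNE_trivial_ballot PNE_sole_vote good_cand_voter by metis
qed

end

end

theorem theorem1:
  fixes m n :: nat and u :: "nat \<Rightarrow> nat \<Rightarrow> nat" and eps :: real
  assumes "m \<ge> 1" and "n \<ge> 1"
    and "valid_profile m n u"
    and "0 < eps" and "eps < min (1 / real m) (1 / real n)"
  shows
    "(\<forall>b. PNE m n u eps b \<longrightarrow>
         card (W m n b) \<in> {1, m} \<and>
         (card (W m n b) = m \<longleftrightarrow>
            trivial_ballot n b \<and> (\<forall>i\<in>voters n. top m u i = 1)))
   \<and> (\<forall>b. PNE m n u eps b \<longrightarrow> card {i \<in> voters n. b i \<noteq> None} \<le> 1)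
   \<and> ((\<exists>b. PNE m n u eps b) \<longleftrightarrow>
         (\<forall>i\<in>voters n. top m u i = 1) \<or> (\<exists>j. good_cand m n u j))
   \<and> ((\<forall>i\<in>voters n. top m u i = 1) \<longrightarrow>
         (\<forall>b. PNE m n u eps b \<longrightarrow> winner m n b = 1))
   \<and> (\<forall>j j'. good_cand m n u j \<and> good_cand m n u j' \<longrightarrow> j = j')
   \<and> (\<forall>j. good_cand m n u j \<longrightarrow> (\<forall>b. PNE m n u eps b \<longrightarrow> winner m n b = j))"
proof -
  have "1 / real m \<le> 1" using assms(1) by simp
  then have "eps < 1" using assms(5) by linarith
  note game = assms(1,3,4) this
  show ?thesis
    using PNE_card_W[OF game] PNE_card_voters[OF game] PNE_exists_iff[OF game]
      PNE_winner_if_tops_1[OF game] good_cand_unique[OF assms(1,3)] PNE_winner_good_cand[OF game]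
    by blast
qed

end
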